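(* Let $G=(V,E)$ be a finite simple graph with diversity $D=D(G)$ and maximum clique size $S$, let $t>1$ be an integer, let $k=\lceil S/t\rceil$, and let $G'$ be a connector of $G$ with parameter $t$. Let $\varphi$ be any proper vertex coloring of $G'$, and for each color $i$ let $G_i$ be the subgraph of $G$ induced by the vertices with $\varphi$-color $i$. Then for every $i$, the maximum degree of $G_i$ is at most $(k-1)\cdot D$.
   Context: The diversity of a vertex $v$ of a graph $G$ is the number of maximal cliques of $G$ containing $v$ (a clique is maximal if no clique of $G$ strictly contains it); the diversity $D(G)$ is the maximum diversity over all vertices. Let $\mathcal Q$ be the set of all maximal cliques of $G$ and let $S(Q)$ denote the number of vertices of $Q$. A connector of $G$ with parameter $t$ is obtained as follows: each clique $Q\in\mathcal Q$ (independently of the other cliques) partitions its vertex set into $k(Q)=\lceil S(Q)/t\rceil$ parts $V_1(Q),\dots,V_{k(Q)}(Q)$, each of size at most $t$. The connector is $G'=(V,E')$ with $E'=\{(u,v)\in E : u,v\in V_i(Q)\text{ for some }Q\in\mathcal Q\text{ and some }i\}$. *)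

theory Defs
  imports Complex_Main
begin

definition simple_graph :: "'a set \<Rightarrow> ('a \<Rightarrow> 'a \<Rightarrow> bool) \<Rightarrow> bool" where
  "simple_graph V E \<longleftrightarrow> finite V \<and> (\<forall>u v. E u v \<longrightarrow> u \<in> V \<and> v \<in> V)
     \<and> (\<forall>u v. E u v \<longrightarrow> E v u) \<and> (\<forall>u. \<not> E u u)"

definition clique :: "'a set \<Rightarrow> ('a \<Rightarrow> 'a \<Rightarrow> bool) \<Rightarrow> 'a set \<Rightarrow> bool" where
  "clique V E Q \<longleftrightarrow> Q \<subseteq> V \<and> (\<forall>u\<in>Q. \<forall>v\<in>Q. u \<noteq> v \<longrightarrow> E u v)"

definition maximal_clique :: "'a set \<Rightarrow> ('a \<Rightarrow> 'a \<Rightarrow> bool) \<Rightarrow> 'a set \<Rightarrow> bool" where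
  "maximal_clique V E Q \<longleftrightarrow> clique V E Q \<and> (\<forall>Q'. clique V E Q' \<and> Q \<subseteq> Q' \<longrightarrow> Q' = Q)"

definition maximal_cliques :: "'a set \<Rightarrow> ('a \<Rightarrow> 'a \<Rightarrow> bool) \<Rightarrow> 'a set set" where
  "maximal_cliques V E = {Q. maximal_clique V E Q}"

definition vertex_diversity :: "'a set \<Rightarrow> ('a \<Rightarrow> 'a \<Rightarrow> bool) \<Rightarrow> 'a \<Rightarrow> nat" where
  "vertex_diversity V E v = card {Q \<in> maximal_cliques V E. v \<in> Q}"

definition diversity :: "'a set \<Rightarrow> ('a \<Rightarrow> 'a \<Rightarrow> bool) \<Rightarrow> nat" where
  "diversity V E = Max (insert 0 (vertex_diversity V E ` V))"

definition max_clique_size :: "'a set \<Rightarrow> ('a \<Rightarrow> 'a \<Rightarrow> bool) \<Rightarrow> nat" where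
  "max_clique_size V E = Max (insert 0 (card ` {Q. clique V E Q}))"

definition num_parts :: "nat \<Rightarrow> nat \<Rightarrow> nat" where
  "num_parts t s = nat \<lceil>real s / real t\<rceil>"

definition connector_partition ::
  "'a set \<Rightarrow> ('a \<Rightarrow> 'a \<Rightarrow> bool) \<Rightarrow> nat \<Rightarrow> ('a set \<Rightarrow> nat \<Rightarrow> 'a set) \<Rightarrow> bool" where
  "connector_partition V E t part \<longleftrightarrow>
     (\<forall>Q \<in> maximal_cliques V E.
        (\<Union>i<num_parts t (card Q). part Q i) = Q
      \<and> (\<forall>i<num_parts t (card Q). \<forall>j<num_parts t (card Q). i \<noteq> j \<longrightarrow> part Q i \<inter> part Q j = {})
      \<and> (\<forall>i<num_parts t (card Q). card (part Q i) \<le> t))"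

definition connector_edges ::
  "'a set \<Rightarrow> ('a \<Rightarrow> 'a \<Rightarrow> bool) \<Rightarrow> nat \<Rightarrow> ('a set \<Rightarrow> nat \<Rightarrow> 'a set) \<Rightarrow> 'a \<Rightarrow> 'a \<Rightarrow> bool" where
  "connector_edges V E t part u v \<longleftrightarrow> E u v \<and>
     (\<exists>Q \<in> maximal_cliques V E. \<exists>i<num_parts t (card Q). u \<in> part Q i \<and> v \<in> part Q i)"

definition proper_coloring :: "'a set \<Rightarrow> ('a \<Rightarrow> 'a \<Rightarrow> bool) \<Rightarrow> ('a \<Rightarrow> 'c) \<Rightarrow> bool" where
  "proper_coloring V E \<phi> \<longleftrightarrow> (\<forall>u\<in>V. \<forall>v\<in>V. E u v \<longrightarrow> \<phi> u \<noteq> \<phi> v)"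

definition induced_vertices :: "'a set \<Rightarrow> ('a \<Rightarrow> 'c) \<Rightarrow> 'c \<Rightarrow> 'a set" where
  "induced_vertices V \<phi> c = {v \<in> V. \<phi> v = c}"

definition induced_edges :: "('a \<Rightarrow> 'a \<Rightarrow> bool) \<Rightarrow> 'a set \<Rightarrow> 'a \<Rightarrow> 'a \<Rightarrow> bool" where
  "induced_edges E W u v \<longleftrightarrow> u \<in> W \<and> v \<in> W \<and> E u v"

definition degree :: "'a set \<Rightarrow> ('a \<Rightarrow> 'a \<Rightarrow> bool) \<Rightarrow> 'a \<Rightarrow> nat" where
  "degree V E v = card {u \<in> V. E v u}"

definition max_degree :: "'a set \<Rightarrow> ('a \<Rightarrow> 'a \<Rightarrow> bool) \<Rightarrow> nat" where
  "max_degree V E = Max (insert 0 (degree V E ` V))"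

end

theory Submission
  imports Defs
begin

text \<open>Every neighbour \<open>u\<close> of \<open>v\<close> in \<open>G\<^sub>c\<close> lies with \<open>v\<close> in some maximal clique \<open>Q\<close>.
  Two vertices in a common part of \<open>Q\<close> are adjacent in the connector and so get different
  colours; hence colour \<open>c\<close> occurs at most once in each of the \<open>k(Q) \<le> k\<close> parts of \<open>Q\<close>, one
  occurrence being \<open>v\<close> itself. Summing over the at most \<open>D\<close> maximal cliques through \<open>v\<close>
  bounds the degree of \<open>v\<close> by \<open>(k - 1) D\<close>.\<close>

lemma num_parts_mono: "a \<le> b \<Longrightarrow> num_parts t a \<le> num_parts t b"
  unfolding num_parts_def
  by (intro nat_mono ceiling_mono divide_right_mono) auto

lemma finite_cliques: "finite V \<Longrightarrow> finite {Q. clique V E Q}"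
  by (rule finite_subset[of _ "Pow V"]) (auto simp: clique_def)

lemma maximal_clique_imp_clique: "Q \<in> maximal_cliques V E \<Longrightarrow> clique V E Q"
  by (simp add: maximal_cliques_def maximal_clique_def)

lemma card_le_max_clique_size:
  assumes "finite V" "clique V E Q"
  shows "card Q \<le> max_clique_size V E"
  unfolding max_clique_size_def
  using finite_cliques[OF assms(1), of E] assms(2) by (intro Max_ge) auto

lemma vertex_diversity_le_diversity:
  assumes "finite V" "v \<in> V"
  shows "vertex_diversity V E v \<le> diversity V E"
  unfolding diversity_def using assms by (intro Max_ge) auto

lemma finite_maximal_cliques: "finite V \<Longrightarrow> finite (maximal_cliques V E)"
  by (rule finite_subset[OF _ finite_cliques]) (auto intro: maximal_clique_imp_clique)

lemma clique_extends_to_maximal_clique: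
  assumes "finite V" "clique V E C"
  obtains Q where "Q \<in> maximal_cliques V E" "C \<subseteq> Q"
proof -
  obtain Q where "clique V E Q" "C \<subseteq> Q" "\<forall>Q'. clique V E Q' \<and> Q \<subseteq> Q' \<longrightarrow> Q' = Q"
    using finite_has_maximal2[OF finite_cliques[OF assms(1)], of C E] assms(2) by auto
  then show thesis using that by (simp add: maximal_cliques_def maximal_clique_def)
qed

lemma edge_in_maximal_clique:
  assumes "simple_graph V E" "E u v"
  obtains Q where "Q \<in> maximal_cliques V E" "u \<in> Q" "v \<in> Q"
proof -
  have "finite V" "clique V E {u, v}"
    using assms unfolding simple_graph_def clique_def by auto
  then obtain Q where "Q \<in> maximal_cliques V E" "{u, v} \<subseteq> Q"
    by (rule clique_extends_to_maximal_clique)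
  then show thesis using that by simp
qed

lemma connector_partition_Union:
  "connector_partition V E t part \<Longrightarrow> Q \<in> maximal_cliques V E
    \<Longrightarrow> (\<Union>i<num_parts t (card Q). part Q i) = Q"
  by (simp add: connector_partition_def)

lemma connector_edge_within_part:
  assumes "connector_partition V E t part" "Q \<in> maximal_cliques V E"
    and "i < num_parts t (card Q)" "a \<in> part Q i" "b \<in> part Q i" "a \<noteq> b"
  shows "connector_edges V E t part a b"
proof -
  have "part Q i \<subseteq> Q" using connector_partition_Union[OF assms(1,2)] assms(3) by blast
  then have "E a b"
    using maximal_clique_imp_clique[OF assms(2)] assms(4-6) unfolding clique_def by blast
  with assms(2-5) show ?thesis unfolding connector_edges_def by blast
qed

lemma card_colour_class_in_maximal_clique:
  assumes cp: "connector_partition V E t part"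
    and pc: "proper_coloring V (connector_edges V E t part) \<phi>"
    and Q: "Q \<in> maximal_cliques V E"
  shows "card {u \<in> Q. \<phi> u = c} \<le> num_parts t (card Q)"
proof -
  let ?n = "num_parts t (card Q)"
  have cover: "\<exists>i<?n. u \<in> part Q i" if "u \<in> Q" for u
    using connector_partition_Union[OF cp Q] that by blast
  define index where "index u = (SOME i. i < ?n \<and> u \<in> part Q i)" for u
  have index: "index u < ?n" "u \<in> part Q (index u)" if "u \<in> Q" for u
    using someI_ex[OF cover[OF that]] by (auto simp: index_def)
  have QV: "Q \<subseteq> V" using maximal_clique_imp_clique[OF Q] by (simp add: clique_def)
  have "inj_on index {u \<in> Q. \<phi> u = c}"
  proof (rule inj_onI, rule ccontr)
    fix a b assume a: "a \<in> {u \<in> Q. \<phi> u = c}" and b: "b \<in> {u \<in> Q. \<phi> u = c}"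
      and same: "index a = index b" and "a \<noteq> b"
    then have "connector_edges V E t part a b"
      using connector_edge_within_part[OF cp Q] index by (metis (lifting) mem_Collect_eq)
    moreover have "a \<in> V" "b \<in> V" using a b QV by auto
    ultimately have "\<phi> a \<noteq> \<phi> b" using pc unfolding proper_coloring_def by blast
    with a b show False by simp
  qed
  moreover have "index ` {u \<in> Q. \<phi> u = c} \<subseteq> {..<?n}" using index by auto
  ultimately show ?thesis by (metis card_inj_on_le card_lessThan finite_lessThan)
qed

lemma neighbours_in_colour_class:
  assumes "simple_graph V E" "v \<in> induced_vertices V \<phi> c"
  shows "{u \<in> induced_vertices V \<phi> c. induced_edges E (induced_vertices V \<phi> c) v u}
           \<subseteq> (\<Union>Q\<in>{Q \<in> maximal_cliques V E. v \<in> Q}. ({u \<in> Q. \<phi> u = c} - {v}))"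
proof
  fix u assume "u \<in> {u \<in> induced_vertices V \<phi> c. induced_edges E (induced_vertices V \<phi> c) v u}"
  then have "E v u" "\<phi> u = c" by (auto simp: induced_edges_def induced_vertices_def)
  moreover have "u \<noteq> v" using \<open>E v u\<close> assms(1) by (auto simp: simple_graph_def)
  moreover obtain Q where "Q \<in> maximal_cliques V E" "v \<in> Q" "u \<in> Q"
    using edge_in_maximal_clique[OF assms(1) \<open>E v u\<close>] .
  ultimately show "u \<in> (\<Union>Q\<in>{Q \<in> maximal_cliques V E. v \<in> Q}. ({u \<in> Q. \<phi> u = c} - {v}))"
    by auto
qed

lemma degree_in_colour_class_le:
  assumes sg: "simple_graph V E"
    and cp: "connector_partition V E t part"
    and pc: "proper_coloring V (connector_edges V E t part) \<phi>"
    and v: "v \<in> induced_vertices V \<phi> c"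
  shows "degree (induced_vertices V \<phi> c) (induced_edges E (induced_vertices V \<phi> c)) v
           \<le> (num_parts t (max_clique_size V E) - 1) * diversity V E"
proof -
  let ?K = "num_parts t (max_clique_size V E)"
  let ?M = "{Q \<in> maximal_cliques V E. v \<in> Q}"
  have fV: "finite V" using sg by (simp add: simple_graph_def)
  have vV: "v \<in> V" and vc: "\<phi> v = c" using v by (auto simp: induced_vertices_def)
  have fM: "finite ?M" using finite_maximal_cliques[OF fV, of E] by simp
  have per_clique: "card ({u \<in> Q. \<phi> u = c} - {v}) \<le> ?K - 1" if Q: "Q \<in> ?M" for Q
  proof -
    have "card ({u \<in> Q. \<phi> u = c} - {v}) = card {u \<in> Q. \<phi> u = c} - 1"
      using Q vc by simp
    also have "\<dots> \<le> num_parts t (card Q) - 1"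
      using card_colour_class_in_maximal_clique[OF cp pc] Q by (simp add: diff_le_mono)
    also have "\<dots> \<le> ?K - 1"
      using card_le_max_clique_size[OF fV maximal_clique_imp_clique] Q
      by (simp add: diff_le_mono num_parts_mono)
    finally show ?thesis .
  qed
  have "degree (induced_vertices V \<phi> c) (induced_edges E (induced_vertices V \<phi> c)) v
          \<le> card (\<Union>Q\<in>?M. ({u \<in> Q. \<phi> u = c} - {v}))"
  proof -
    have "finite (\<Union>Q\<in>?M. ({u \<in> Q. \<phi> u = c} - {v}))"
      using maximal_clique_imp_clique by (intro finite_subset[OF _ fV]) (fastforce simp: clique_def)
    then show ?thesis
      unfolding degree_def using neighbours_in_colour_class[OF sg v] by (rule card_mono)
  qed
  also have "\<dots> \<le> (\<Sum>Q\<in>?M. card ({u \<in> Q. \<phi> u = c} - {v}))"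
    by (rule card_UN_le[OF fM])
  also have "\<dots> \<le> (\<Sum>Q\<in>?M. ?K - 1)"
    by (rule sum_mono[OF per_clique])
  also have "\<dots> = card ?M * (?K - 1)"
    by simp
  also have "\<dots> \<le> diversity V E * (?K - 1)"
    using vertex_diversity_le_diversity[OF fV vV, of E]
    by (simp add: vertex_diversity_def)
  finally show ?thesis by (simp add: mult.commute)
qed

theorem mainTheorem2:
  fixes V :: "'a set" and E :: "'a \<Rightarrow> 'a \<Rightarrow> bool" and t :: nat
    and part :: "'a set \<Rightarrow> nat \<Rightarrow> 'a set" and \<phi> :: "'a \<Rightarrow> 'c"
  assumes "simple_graph V E"
    and "t > 1"
    and "connector_partition V E t part"
    and "proper_coloring V (connector_edges V E t part) \<phi>"
  shows "\<forall>c. max_degree (induced_vertices V \<phi> c) (induced_edges E (induced_vertices V \<phi> c))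
           \<le> (num_parts t (max_clique_size V E) - 1) * diversity V E"
proof
  fix c
  have "finite (induced_vertices V \<phi> c)"
    using assms(1) by (simp add: simple_graph_def induced_vertices_def)
  then show "max_degree (induced_vertices V \<phi> c) (induced_edges E (induced_vertices V \<phi> c))
               \<le> (num_parts t (max_clique_size V E) - 1) * diversity V E"
    unfolding max_degree_def
    using degree_in_colour_class_le[OF assms(1,3,4)] by (subst Max_le_iff) auto
qed

end
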